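(* Let $(R,+,\cdot)$ be a finite simple additively idempotent semiring with $|R|>2$ for which there exists a finite idempotent sub-irreducible $R$-semimodule, and suppose its greatest element $\infty_R$ is neither left nor right absorbing. Then $(R,+,\cdot)$ has a zero, i.e., $(R,+)$ has a neutral element which is multiplicatively absorbing.
   Context: A semiring is a nonempty set with a commutative semigroup operation $+$ and a semigroup operation $\cdot$ satisfying both distributive laws; simple if its only congruences are the identity and the full relation; additively idempotent if $r+r=r$, with order $x\le y:\Leftrightarrow x+y=y$ and greatest element $\infty_R=\sum_{r\in R}r$. An element $r$ is right absorbing if $sr=r$ for all $s$, left absorbing if $rs=r$ for all $s$, absorbing if both. An $R$-semimodule is a commutative semigroup $(M,+)$ with an action $R\times M\to M$ satisfying $r(sx)=(rs)x$, $(r+s)x=rx+sx$, $r(x+y)=rx+ry$; idempotent if $x+x=x$. A subsemimodule is a subsemigroup closed under the action. $M$ is quasitrivial if $rx=sx$ for all $r,s,x$; id-quasitrivial if $rx=x$ for all $r,x$; sub-irreducible if not quasitrivial and all proper subsemimodules are id-quasitrivial. *)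

theory Defs
  imports Main
begin

definition semiring :: "'a set \<Rightarrow> ('a \<Rightarrow> 'a \<Rightarrow> 'a) \<Rightarrow> ('a \<Rightarrow> 'a \<Rightarrow> 'a) \<Rightarrow> bool" where
  "semiring R add mul \<longleftrightarrow> R \<noteq> {} \<and>
     (\<forall>a\<in>R. \<forall>b\<in>R. add a b \<in> R \<and> mul a b \<in> R) \<and>
     (\<forall>a\<in>R. \<forall>b\<in>R. \<forall>c\<in>R. add (add a b) c = add a (add b c)) \<and>
     (\<forall>a\<in>R. \<forall>b\<in>R. add a b = add b a) \<and>
     (\<forall>a\<in>R. \<forall>b\<in>R. \<forall>c\<in>R. mul (mul a b) c = mul a (mul b c)) \<and>
     (\<forall>a\<in>R. \<forall>b\<in>R. \<forall>c\<in>R. mul a (add b c) = add (mul a b) (mul a c)) \<and>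
     (\<forall>a\<in>R. \<forall>b\<in>R. \<forall>c\<in>R. mul (add a b) c = add (mul a c) (mul b c))"

definition semiring_congruence :: "'a set \<Rightarrow> ('a \<Rightarrow> 'a \<Rightarrow> 'a) \<Rightarrow> ('a \<Rightarrow> 'a \<Rightarrow> 'a) \<Rightarrow> 'a rel \<Rightarrow> bool" where
  "semiring_congruence R add mul \<rho> \<longleftrightarrow> equiv R \<rho> \<and>
     (\<forall>a b c d. (a, b) \<in> \<rho> \<longrightarrow> (c, d) \<in> \<rho> \<longrightarrow>
        (add a c, add b d) \<in> \<rho> \<and> (mul a c, mul b d) \<in> \<rho>)"

definition simple_semiring :: "'a set \<Rightarrow> ('a \<Rightarrow> 'a \<Rightarrow> 'a) \<Rightarrow> ('a \<Rightarrow> 'a \<Rightarrow> 'a) \<Rightarrow> bool" where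
  "simple_semiring R add mul \<longleftrightarrow> semiring R add mul \<and>
     (\<forall>\<rho>. semiring_congruence R add mul \<rho> \<longrightarrow> \<rho> = Id_on R \<or> \<rho> = R \<times> R)"

definition add_idempotent :: "'a set \<Rightarrow> ('a \<Rightarrow> 'a \<Rightarrow> 'a) \<Rightarrow> bool" where
  "add_idempotent R add \<longleftrightarrow> (\<forall>r\<in>R. add r r = r)"

text \<open>Greatest element w.r.t. x \<le> y iff x + y = y (for finite additively idempotent R
  this is the sum of all elements).\<close>
definition greatest_elem :: "'a set \<Rightarrow> ('a \<Rightarrow> 'a \<Rightarrow> 'a) \<Rightarrow> 'a" where
  "greatest_elem R add = (THE z. z \<in> R \<and> (\<forall>r\<in>R. add r z = z))"

definition right_absorbing :: "'a set \<Rightarrow> ('a \<Rightarrow> 'a \<Rightarrow> 'a) \<Rightarrow> 'a \<Rightarrow> bool" where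
  "right_absorbing R mul r \<longleftrightarrow> (\<forall>s\<in>R. mul s r = r)"

definition left_absorbing :: "'a set \<Rightarrow> ('a \<Rightarrow> 'a \<Rightarrow> 'a) \<Rightarrow> 'a \<Rightarrow> bool" where
  "left_absorbing R mul r \<longleftrightarrow> (\<forall>s\<in>R. mul r s = r)"

definition semimodule :: "'a set \<Rightarrow> ('a \<Rightarrow> 'a \<Rightarrow> 'a) \<Rightarrow> ('a \<Rightarrow> 'a \<Rightarrow> 'a) \<Rightarrow>
    'b set \<Rightarrow> ('b \<Rightarrow> 'b \<Rightarrow> 'b) \<Rightarrow> ('a \<Rightarrow> 'b \<Rightarrow> 'b) \<Rightarrow> bool" where
  "semimodule R add mul M madd act \<longleftrightarrow>
     (\<forall>x\<in>M. \<forall>y\<in>M. madd x y \<in> M) \<and>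
     (\<forall>x\<in>M. \<forall>y\<in>M. \<forall>z\<in>M. madd (madd x y) z = madd x (madd y z)) \<and>
     (\<forall>x\<in>M. \<forall>y\<in>M. madd x y = madd y x) \<and>
     (\<forall>r\<in>R. \<forall>x\<in>M. act r x \<in> M) \<and>
     (\<forall>r\<in>R. \<forall>s\<in>R. \<forall>x\<in>M. act r (act s x) = act (mul r s) x) \<and>
     (\<forall>r\<in>R. \<forall>s\<in>R. \<forall>x\<in>M. act (add r s) x = madd (act r x) (act s x)) \<and>
     (\<forall>r\<in>R. \<forall>x\<in>M. \<forall>y\<in>M. act r (madd x y) = madd (act r x) (act r y))"

definition idempotent_semimodule :: "'b set \<Rightarrow> ('b \<Rightarrow> 'b \<Rightarrow> 'b) \<Rightarrow> bool" where
  "idempotent_semimodule M madd \<longleftrightarrow> (\<forall>x\<in>M. madd x x = x)"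

definition subsemimodule :: "'a set \<Rightarrow> 'b set \<Rightarrow> ('b \<Rightarrow> 'b \<Rightarrow> 'b) \<Rightarrow> ('a \<Rightarrow> 'b \<Rightarrow> 'b) \<Rightarrow> 'b set \<Rightarrow> bool" where
  "subsemimodule R M madd act N \<longleftrightarrow> N \<subseteq> M \<and>
     (\<forall>x\<in>N. \<forall>y\<in>N. madd x y \<in> N) \<and> (\<forall>r\<in>R. \<forall>x\<in>N. act r x \<in> N)"

definition quasitrivial :: "'a set \<Rightarrow> 'b set \<Rightarrow> ('a \<Rightarrow> 'b \<Rightarrow> 'b) \<Rightarrow> bool" where
  "quasitrivial R M act \<longleftrightarrow> (\<forall>r\<in>R. \<forall>s\<in>R. \<forall>x\<in>M. act r x = act s x)"

definition id_quasitrivial :: "'a set \<Rightarrow> 'b set \<Rightarrow> ('a \<Rightarrow> 'b \<Rightarrow> 'b) \<Rightarrow> bool" where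
  "id_quasitrivial R M act \<longleftrightarrow> (\<forall>r\<in>R. \<forall>x\<in>M. act r x = x)"

definition sub_irreducible :: "'a set \<Rightarrow> 'b set \<Rightarrow> ('b \<Rightarrow> 'b \<Rightarrow> 'b) \<Rightarrow> ('a \<Rightarrow> 'b \<Rightarrow> 'b) \<Rightarrow> bool" where
  "sub_irreducible R M madd act \<longleftrightarrow> \<not> quasitrivial R M act \<and>
     (\<forall>N. subsemimodule R M madd act N \<and> N \<noteq> M \<longrightarrow> id_quasitrivial R N act)"

end

theory Submission
  imports Defs
begin

text \<open>
  A simple semiring acts faithfully on any module that is not quasitrivial, since the kernel of
  the action is a congruence. Let \<open>F\<close> be the set of points of \<open>M\<close> fixed by every \<open>r\<close>. Every
  cyclic subsemimodule \<open>R z\<close> is either \<open>M\<close> or contained in \<open>F\<close>. If \<open>F\<close> were empty, all cyclic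
  subsemimodules would be \<open>M\<close>, so \<open>\<infinity> z\<close> would be the top of \<open>M\<close> for every \<open>z\<close>; then
  \<open>\<infinity> s\<close> and \<open>\<infinity>\<close> act alike and \<open>\<infinity>\<close> would be left absorbing. Hence every orbit meets \<open>F\<close>,
  and finiteness of \<open>M\<close> yields an element mapping all of \<open>M\<close> into \<open>F\<close>. These elements form an
  ideal \<open>I\<close> which misses \<open>\<infinity>\<close> because \<open>\<infinity>\<close> is not right absorbing. The Bourne congruence of \<open>I\<close>
  is then not full, hence trivial, which forces \<open>I\<close> to be a single zero element.
\<close>

definition semiring_ideal :: "'a set \<Rightarrow> ('a \<Rightarrow> 'a \<Rightarrow> 'a) \<Rightarrow> ('a \<Rightarrow> 'a \<Rightarrow> 'a) \<Rightarrow> 'a set \<Rightarrow> bool" where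
  "semiring_ideal R add mul I \<longleftrightarrow> I \<noteq> {} \<and> I \<subseteq> R \<and> (\<forall>a\<in>I. \<forall>b\<in>I. add a b \<in> I) \<and>
     (\<forall>a\<in>I. \<forall>r\<in>R. mul r a \<in> I \<and> mul a r \<in> I)"

definition bourne_relation :: "'a set \<Rightarrow> ('a \<Rightarrow> 'a \<Rightarrow> 'a) \<Rightarrow> 'a set \<Rightarrow> 'a rel" where
  "bourne_relation R add I = {(r, s). r \<in> R \<and> s \<in> R \<and> (\<exists>i\<in>I. \<exists>j\<in>I. add r i = add s j)}"

definition action_kernel :: "'a set \<Rightarrow> 'b set \<Rightarrow> ('a \<Rightarrow> 'b \<Rightarrow> 'b) \<Rightarrow> 'a rel" where
  "action_kernel R M act = {(r, s). r \<in> R \<and> s \<in> R \<and> (\<forall>x\<in>M. act r x = act s x)}"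

definition faithful :: "'a set \<Rightarrow> 'b set \<Rightarrow> ('a \<Rightarrow> 'b \<Rightarrow> 'b) \<Rightarrow> bool" where
  "faithful R M act \<longleftrightarrow> (\<forall>r\<in>R. \<forall>s\<in>R. (\<forall>x\<in>M. act r x = act s x) \<longrightarrow> r = s)"

definition fixed_points :: "'a set \<Rightarrow> 'b set \<Rightarrow> ('a \<Rightarrow> 'b \<Rightarrow> 'b) \<Rightarrow> 'b set" where
  "fixed_points R M act = {x \<in> M. \<forall>r\<in>R. act r x = x}"

definition fixing_ideal :: "'a set \<Rightarrow> 'b set \<Rightarrow> ('a \<Rightarrow> 'b \<Rightarrow> 'b) \<Rightarrow> 'a set" where
  "fixing_ideal R M act = {e \<in> R. \<forall>x\<in>M. act e x \<in> fixed_points R M act}"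

locale carrier_semiring =
  fixes R :: "'a set" and add mul :: "'a \<Rightarrow> 'a \<Rightarrow> 'a"
  assumes semiring: "semiring R add mul"
begin

lemma carrier_nonempty: "R \<noteq> {}"
  using semiring unfolding semiring_def by blast

lemma add_closed: "a \<in> R \<Longrightarrow> b \<in> R \<Longrightarrow> add a b \<in> R"
  and mul_closed: "a \<in> R \<Longrightarrow> b \<in> R \<Longrightarrow> mul a b \<in> R"
  and add_assoc: "a \<in> R \<Longrightarrow> b \<in> R \<Longrightarrow> c \<in> R \<Longrightarrow> add (add a b) c = add a (add b c)"
  and add_commute: "a \<in> R \<Longrightarrow> b \<in> R \<Longrightarrow> add a b = add b a"
  and distrib_left: "a \<in> R \<Longrightarrow> b \<in> R \<Longrightarrow> c \<in> R \<Longrightarrow> mul a (add b c) = add (mul a b) (mul a c)"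
  and distrib_right: "a \<in> R \<Longrightarrow> b \<in> R \<Longrightarrow> c \<in> R \<Longrightarrow> mul (add a b) c = add (mul a c) (mul b c)"
  using semiring unfolding semiring_def by blast+

lemma add_left_commute: "a \<in> R \<Longrightarrow> b \<in> R \<Longrightarrow> c \<in> R \<Longrightarrow> add a (add b c) = add b (add a c)"
  by (metis add_assoc add_commute)

lemma add_add_swap:
  "a \<in> R \<Longrightarrow> b \<in> R \<Longrightarrow> c \<in> R \<Longrightarrow> d \<in> R \<Longrightarrow>
    add (add a b) (add c d) = add (add a c) (add b d)"
  by (simp add: add_assoc add_closed add_left_commute[of b c d])

lemma greatest_elem_eqI:
  assumes "T \<in> R" and "\<forall>r\<in>R. add r T = T"
  shows "greatest_elem R add = T"
  unfolding greatest_elem_def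
  by (rule the_equality) (use assms add_commute in metis)+

lemma upper_bound_exists:
  assumes "add_idempotent R add" and "finite A" "A \<noteq> {}" "A \<subseteq> R"
  shows "\<exists>t\<in>R. \<forall>a\<in>A. add a t = t"
  using assms(2-4)
proof (induction A rule: finite_ne_induct)
  case (singleton a)
  then show ?case using assms(1) unfolding add_idempotent_def by auto
next
  case (insert b A)
  then obtain t where t: "t \<in> R" "\<forall>a\<in>A. add a t = t" by auto
  have "add a (add b t) = add b t" if "a \<in> insert b A" for a
    using that insert.prems assms(1) t add_assoc[of b b t] add_left_commute[of a b t]
    unfolding add_idempotent_def by auto
  then show ?case using add_closed insert.prems t by blast
qed

lemma bourne_relation_trans:
  assumes "I \<subseteq> R" and "\<forall>a\<in>I. \<forall>b\<in>I. add a b \<in> I"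
    and "(r, s) \<in> bourne_relation R add I" "(s, t) \<in> bourne_relation R add I"
  shows "(r, t) \<in> bourne_relation R add I"
proof -
  obtain i j where ij: "i \<in> I" "j \<in> I" "add r i = add s j" "r \<in> R" "s \<in> R"
    using assms(3) unfolding bourne_relation_def by blast
  obtain k l where kl: "k \<in> I" "l \<in> I" "add s k = add t l" "t \<in> R"
    using assms(4) unfolding bourne_relation_def by blast
  have R: "i \<in> R" "j \<in> R" "k \<in> R" "l \<in> R" using ij kl assms(1) by auto
  have "add r (add i k) = add (add r i) k" using add_assoc[of r i k] ij R by simp
  also have "\<dots> = add (add s j) k" using ij by simp
  also have "\<dots> = add (add s k) j" using ij R by (metis add_assoc add_commute)
  also have "\<dots> = add t (add l j)" using kl ij R by (simp add: add_assoc)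
  finally show ?thesis unfolding bourne_relation_def using ij kl assms(2) by blast
qed

lemma bourne_relation_congruence:
  assumes "semiring_ideal R add mul I"
  shows "semiring_congruence R add mul (bourne_relation R add I)"
proof -
  let ?\<rho> = "bourne_relation R add I"
  have IR: "I \<subseteq> R" and Iadd: "\<forall>a\<in>I. \<forall>b\<in>I. add a b \<in> I"
    and Imul: "\<And>a r. a \<in> I \<Longrightarrow> r \<in> R \<Longrightarrow> mul r a \<in> I \<and> mul a r \<in> I"
    using assms unfolding semiring_ideal_def by blast+
  have trans: "(r, t) \<in> ?\<rho>" if "(r, s) \<in> ?\<rho>" "(s, t) \<in> ?\<rho>" for r s t
    using bourne_relation_trans[OF IR Iadd that] .
  have mul_right: "(mul a c, mul b c) \<in> ?\<rho>" and mul_left: "(mul c a, mul c b) \<in> ?\<rho>"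
    if ab: "(a, b) \<in> ?\<rho>" and c: "c \<in> R" for a b c
  proof -
    obtain i j where ij: "i \<in> I" "j \<in> I" "add a i = add b j" "a \<in> R" "b \<in> R"
      using ab unfolding bourne_relation_def by blast
    then have "i \<in> R" "j \<in> R" using IR by auto
    with ij c have "add (mul a c) (mul i c) = add (mul b c) (mul j c)"
      and "add (mul c a) (mul c i) = add (mul c b) (mul c j)"
      by (metis distrib_right, metis distrib_left)
    then show "(mul a c, mul b c) \<in> ?\<rho>" "(mul c a, mul c b) \<in> ?\<rho>"
      unfolding bourne_relation_def using ij Imul c mul_closed by blast+
  qed
  have add_compat: "(add a c, add b d) \<in> ?\<rho>"
    if ab: "(a, b) \<in> ?\<rho>" and cd: "(c, d) \<in> ?\<rho>" for a b c d
  proof -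
    obtain i j where ij: "i \<in> I" "j \<in> I" "add a i = add b j" "a \<in> R" "b \<in> R"
      using ab unfolding bourne_relation_def by blast
    obtain k l where kl: "k \<in> I" "l \<in> I" "add c k = add d l" "c \<in> R" "d \<in> R"
      using cd unfolding bourne_relation_def by blast
    have R: "i \<in> R" "j \<in> R" "k \<in> R" "l \<in> R" using ij kl IR by auto
    have "add (add a c) (add i k) = add (add a i) (add c k)"
      using add_add_swap[of a c i k] ij kl R by blast
    also have "\<dots> = add (add b j) (add d l)" using ij kl by simp
    also have "\<dots> = add (add b d) (add j l)"
      using add_add_swap[of b j d l] ij kl R by blast
    finally show ?thesis unfolding bourne_relation_def using ij kl Iadd add_closed by blast
  qed
  have "equiv R ?\<rho>"
  proof (rule equivI)
    show "?\<rho> \<subseteq> R \<times> R" unfolding bourne_relation_def by blast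
    show "refl_on R ?\<rho>"
      using assms unfolding refl_on_def bourne_relation_def semiring_ideal_def by blast
    show "sym ?\<rho>" unfolding sym_def bourne_relation_def by (auto simp: eq_commute)
    show "Relation.trans ?\<rho>" using trans by (blast intro: transI)
  qed
  moreover have "(mul a c, mul b d) \<in> ?\<rho>" if "(a, b) \<in> ?\<rho>" "(c, d) \<in> ?\<rho>" for a b c d
    using that mul_right[of a b c] mul_left[of c d b] trans
    unfolding bourne_relation_def by blast
  ultimately show ?thesis unfolding semiring_congruence_def using add_compat by blast
qed

lemma bourne_relation_eq_Id_if_top_notin:
  assumes "simple_semiring R add mul" and I: "semiring_ideal R add mul I"
    and T: "T \<in> R" "\<forall>r\<in>R. add r T = T" "T \<notin> I"
  shows "bourne_relation R add I = Id_on R"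
proof -
  have IR: "I \<subseteq> R" and Iadd: "\<forall>a\<in>I. \<forall>b\<in>I. add a b \<in> I" and "I \<noteq> {}"
    using I unfolding semiring_ideal_def by blast+
  then obtain e where e: "e \<in> I" by blast
  have "bourne_relation R add I \<noteq> R \<times> R"
  proof
    assume "bourne_relation R add I = R \<times> R"
    then have "(T, e) \<in> bourne_relation R add I" using T e IR by blast
    then obtain i j where ij: "i \<in> I" "j \<in> I" "add T i = add e j"
      unfolding bourne_relation_def by blast
    moreover have "add T i = T" using add_commute[of T i] T ij IR by auto
    ultimately have "T = add e j" by simp
    then show False using Iadd e ij T by auto
  qed
  then show ?thesis
    using assms(1) bourne_relation_congruence[OF I] unfolding simple_semiring_def by blast
qed

lemma zero_if_ideal_misses_top:
  assumes "simple_semiring R add mul" and "add_idempotent R add"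
    and I: "semiring_ideal R add mul I"
    and T: "T \<in> R" "\<forall>r\<in>R. add r T = T" "T \<notin> I"
  shows "\<exists>z\<in>R. (\<forall>r\<in>R. add z r = r) \<and> (\<forall>r\<in>R. mul z r = z \<and> mul r z = z)"
proof -
  let ?\<rho> = "bourne_relation R add I"
  have IR: "I \<subseteq> R" and Imul: "\<And>a r. a \<in> I \<Longrightarrow> r \<in> R \<Longrightarrow> mul r a \<in> I \<and> mul a r \<in> I"
    using I unfolding semiring_ideal_def by blast+
  obtain e where e: "e \<in> I" using I unfolding semiring_ideal_def by blast
  have rho_Id: "?\<rho> = Id_on R" using bourne_relation_eq_Id_if_top_notin[OF assms(1) I T] .
  have neutral: "add r i = r" if "r \<in> R" "i \<in> I" for r i
  proof -
    have "add r i = add (add r i) i"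
      using that IR assms(2) add_assoc[of r i i] unfolding add_idempotent_def by auto
    then have "(r, add r i) \<in> ?\<rho>"
      unfolding bourne_relation_def using that IR add_closed by blast
    then show ?thesis using rho_Id by auto
  qed
  have I_single: "a = e" if a: "a \<in> I" for a
  proof -
    have R: "a \<in> R" "e \<in> R" using a e IR by auto
    have "a = add a e" using neutral[of a e] R e by simp
    also have "\<dots> = add e a" using add_commute R by blast
    also have "\<dots> = e" using neutral[of e a] R a by simp
    finally show ?thesis .
  qed
  show ?thesis
  proof (intro bexI[of _ e] conjI ballI)
    fix r assume r: "r \<in> R"
    show "add e r = r" using neutral[OF r e] add_commute[of e r] r e IR by auto
    show "mul e r = e" "mul r e = e" using Imul[OF e r] I_single by auto
  qed (use e IR in auto)
qed

end

locale carrier_semimodule = carrier_semiring R add mul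
  for R :: "'a set" and add mul :: "'a \<Rightarrow> 'a \<Rightarrow> 'a" +
  fixes M :: "'b set" and madd :: "'b \<Rightarrow> 'b \<Rightarrow> 'b" and act :: "'a \<Rightarrow> 'b \<Rightarrow> 'b"
  assumes semimodule: "semimodule R add mul M madd act"
begin

lemma madd_closed: "x \<in> M \<Longrightarrow> y \<in> M \<Longrightarrow> madd x y \<in> M"
  and madd_commute: "x \<in> M \<Longrightarrow> y \<in> M \<Longrightarrow> madd x y = madd y x"
  and act_closed: "r \<in> R \<Longrightarrow> x \<in> M \<Longrightarrow> act r x \<in> M"
  and act_act: "r \<in> R \<Longrightarrow> s \<in> R \<Longrightarrow> x \<in> M \<Longrightarrow> act r (act s x) = act (mul r s) x"
  and act_add: "r \<in> R \<Longrightarrow> s \<in> R \<Longrightarrow> x \<in> M \<Longrightarrow> act (add r s) x = madd (act r x) (act s x)"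
  and act_madd: "r \<in> R \<Longrightarrow> x \<in> M \<Longrightarrow> y \<in> M \<Longrightarrow> act r (madd x y) = madd (act r x) (act r y)"
  using semimodule unfolding semimodule_def by blast+

lemma action_kernel_congruence: "semiring_congruence R add mul (action_kernel R M act)"
  unfolding semiring_congruence_def
proof (intro conjI allI impI)
  show "equiv R (action_kernel R M act)"
    unfolding action_kernel_def by (rule equivI) (auto simp: refl_on_def sym_def trans_def)
  fix a b c d
  assume "(a, b) \<in> action_kernel R M act" "(c, d) \<in> action_kernel R M act"
  then show "(add a c, add b d) \<in> action_kernel R M act"
    and "(mul a c, mul b d) \<in> action_kernel R M act"
    unfolding action_kernel_def using add_closed mul_closed act_add act_closed
    by (auto simp flip: act_act)
qed

lemma faithful_if_simple:
  assumes "simple_semiring R add mul" and "\<not> quasitrivial R M act"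
  shows "faithful R M act"
proof -
  have "action_kernel R M act \<noteq> R \<times> R"
  proof
    assume "action_kernel R M act = R \<times> R"
    then have "quasitrivial R M act" unfolding quasitrivial_def action_kernel_def by auto
    with assms(2) show False by blast
  qed
  moreover have "action_kernel R M act = Id_on R \<or> action_kernel R M act = R \<times> R"
    using assms(1) action_kernel_congruence unfolding simple_semiring_def by blast
  ultimately show ?thesis unfolding faithful_def action_kernel_def Id_on_def by blast
qed

lemma orbit_subsemimodule:
  assumes z: "z \<in> M"
  shows "subsemimodule R M madd act ((\<lambda>r. act r z) ` R)"
  unfolding subsemimodule_def
proof (intro conjI ballI)
  show "(\<lambda>r. act r z) ` R \<subseteq> M" using act_closed z by auto
next
  fix x y assume "x \<in> (\<lambda>r. act r z) ` R" "y \<in> (\<lambda>r. act r z) ` R"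
  then obtain r s where "r \<in> R" "s \<in> R" "x = act r z" "y = act s z" by blast
  then have "madd x y = act (add r s) z" "add r s \<in> R" using act_add z add_closed by auto
  then show "madd x y \<in> (\<lambda>r. act r z) ` R" by blast
next
  fix t x assume t: "t \<in> R" and "x \<in> (\<lambda>r. act r z) ` R"
  then obtain r where "r \<in> R" "x = act r z" by blast
  then have "act t x = act (mul t r) z" "mul t r \<in> R" using act_act t z mul_closed by auto
  then show "act t x \<in> (\<lambda>r. act r z) ` R" by blast
qed

lemma orbit_cases:
  assumes "sub_irreducible R M madd act" and "z \<in> M"
  shows "(\<lambda>r. act r z) ` R = M \<or> (\<lambda>r. act r z) ` R \<subseteq> fixed_points R M act"
proof (cases "(\<lambda>r. act r z) ` R = M")
  case False
  then have "id_quasitrivial R ((\<lambda>r. act r z) ` R) act"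
    using assms(1) orbit_subsemimodule[OF assms(2)] unfolding sub_irreducible_def by blast
  then show ?thesis
    using act_closed assms(2) unfolding id_quasitrivial_def fixed_points_def by auto
qed simp

lemma left_absorbing_if_no_fixed_points:
  assumes "sub_irreducible R M madd act" and "faithful R M act"
    and T: "T \<in> R" "\<forall>r\<in>R. add r T = T"
    and "fixed_points R M act = {}"
  shows "left_absorbing R mul T"
proof -
  have top: "madd m (act T z) = act T z" if "z \<in> M" "m \<in> M" for z m
  proof -
    have "(\<lambda>r. act r z) ` R = M"
      using orbit_cases[OF assms(1) that(1)] assms(5) carrier_nonempty by blast
    with that obtain r where "r \<in> R" "m = act r z" by blast
    then show ?thesis using act_add[of r T z] T that by simp
  qed
  have "mul T s = T" if s: "s \<in> R" for s
  proof -
    have "act (mul T s) x = act T x" if "x \<in> M" for x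
      using top[of x "act T (act s x)"] top[of "act s x" "act T x"] madd_commute
        act_closed act_act s T that by metis
    then show ?thesis using assms(2) mul_closed s T unfolding faithful_def by blast
  qed
  then show ?thesis unfolding left_absorbing_def by blast
qed

lemma orbit_meets_fixed_points:
  assumes "sub_irreducible R M madd act" and "fixed_points R M act \<noteq> {}" and "z \<in> M"
  shows "\<exists>r\<in>R. act r z \<in> fixed_points R M act"
  using orbit_cases[OF assms(1,3)]
proof
  assume orbit: "(\<lambda>r. act r z) ` R = M"
  obtain f where f: "f \<in> fixed_points R M act" using assms(2) by blast
  then have "f \<in> (\<lambda>r. act r z) ` R" unfolding orbit fixed_points_def by blast
  with f show ?thesis by blast
next
  assume "(\<lambda>r. act r z) ` R \<subseteq> fixed_points R M act"
  then show ?thesis using carrier_nonempty by blast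
qed

lemma fixing_ideal_nonempty:
  assumes "finite M" and orbit: "\<And>z. z \<in> M \<Longrightarrow> \<exists>r\<in>R. act r z \<in> fixed_points R M act"
  shows "fixing_ideal R M act \<noteq> {}"
proof -
  have "\<exists>e\<in>R. \<forall>x\<in>Y. act e x \<in> fixed_points R M act" if "finite Y" "Y \<subseteq> M" for Y
    using that
  proof (induction Y rule: finite_induct)
    case empty
    then show ?case using carrier_nonempty by blast
  next
    case (insert y Y)
    then obtain e where e: "e \<in> R" "\<forall>x\<in>Y. act e x \<in> fixed_points R M act" by auto
    obtain r where r: "r \<in> R" "act r (act e y) \<in> fixed_points R M act"
      using orbit act_closed e insert.prems by blast
    have "act (mul r e) x \<in> fixed_points R M act" if "x \<in> insert y Y" for x
    proof (cases "x = y")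
      case True
      then show ?thesis using r e insert.prems act_act by auto
    next
      case False
      then have x: "x \<in> Y" "x \<in> M" using that insert.prems by auto
      then have "act (mul r e) x = act e x"
        using act_act[of r e x] r e unfolding fixed_points_def by auto
      then show ?thesis using e x by simp
    qed
    then show ?case using mul_closed r e by blast
  qed
  then show ?thesis using assms(1) unfolding fixing_ideal_def by blast
qed

lemma fixing_ideal_is_ideal:
  assumes "fixing_ideal R M act \<noteq> {}"
  shows "semiring_ideal R add mul (fixing_ideal R M act)"
  unfolding semiring_ideal_def
proof (intro conjI ballI)
  show "fixing_ideal R M act \<noteq> {}" "fixing_ideal R M act \<subseteq> R"
    using assms unfolding fixing_ideal_def by auto
next
  fix a b assume "a \<in> fixing_ideal R M act" "b \<in> fixing_ideal R M act"
  then show "add a b \<in> fixing_ideal R M act"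
    unfolding fixing_ideal_def fixed_points_def
    by (auto simp: act_add add_closed madd_closed act_madd)
next
  fix a r assume "a \<in> fixing_ideal R M act" "r \<in> R"
  then show "mul r a \<in> fixing_ideal R M act" "mul a r \<in> fixing_ideal R M act"
    unfolding fixing_ideal_def fixed_points_def
    by (auto simp: mul_closed act_closed simp flip: act_act)
qed

lemma not_right_absorbing_not_in_fixing_ideal:
  assumes "faithful R M act" and "a \<in> R" and "\<not> right_absorbing R mul a"
  shows "a \<notin> fixing_ideal R M act"
proof
  assume "a \<in> fixing_ideal R M act"
  then have "act s (act a x) = act a x" if "s \<in> R" "x \<in> M" for s x
    using that unfolding fixing_ideal_def fixed_points_def by blast
  then have "mul s a = a" if "s \<in> R" for s
    using assms(1,2) that mul_closed act_act unfolding faithful_def by metis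
  with assms(3) show False unfolding right_absorbing_def by blast
qed

end

theorem proposition2p24:
  fixes R :: "'a set" and add mul :: "'a \<Rightarrow> 'a \<Rightarrow> 'a"
  assumes "finite R"
    and "simple_semiring R add mul"
    and "add_idempotent R add"
    and "card R > 2"
    and "\<exists>(M :: 'b set) madd act. finite M \<and> semimodule R add mul M madd act \<and>
           idempotent_semimodule M madd \<and> sub_irreducible R M madd act"
    and "\<not> left_absorbing R mul (greatest_elem R add)"
    and "\<not> right_absorbing R mul (greatest_elem R add)"
  shows "\<exists>z\<in>R. (\<forall>r\<in>R. add z r = r) \<and> (\<forall>r\<in>R. mul z r = z \<and> mul r z = z)"
proof -
  obtain M :: "'b set" and madd act where
    "finite M" and "semimodule R add mul M madd act" and irr: "sub_irreducible R M madd act"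
    using assms(5) by blast
  then interpret carrier_semimodule R add mul M madd act
    using assms(2) by unfold_locales (simp_all add: simple_semiring_def)
  obtain T where T: "T \<in> R" "\<forall>r\<in>R. add r T = T"
    using upper_bound_exists[OF assms(3,1) carrier_nonempty subset_refl] by blast
  with assms(6,7) have "\<not> left_absorbing R mul T" "\<not> right_absorbing R mul T"
    using greatest_elem_eqI by auto
  have "faithful R M act"
    using faithful_if_simple assms(2) irr unfolding sub_irreducible_def by blast
  then have "fixed_points R M act \<noteq> {}"
    using left_absorbing_if_no_fixed_points irr T \<open>\<not> left_absorbing R mul T\<close> by blast
  then have "fixing_ideal R M act \<noteq> {}"
    using fixing_ideal_nonempty \<open>finite M\<close> orbit_meets_fixed_points irr by blast
  then show ?thesis
    using zero_if_ideal_misses_top[OF assms(2,3) fixing_ideal_is_ideal T]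
      not_right_absorbing_not_in_fixing_ideal \<open>faithful R M act\<close> T
      \<open>\<not> right_absorbing R mul T\<close> by blast
qed

end
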